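(* Let $S=(X,\prec,\sqsubset)$ be an so-structure and $\alpha,\beta\in X$. Then ($\alpha\lhd\beta$ or $\beta\lhd\alpha$ for every $\lhd\in ext(S)$) if and only if ($\alpha\prec\beta$ or $\beta\prec\alpha$).
   Context: A stratified order structure (so-structure) is a triple $S=(X,\prec,\sqsubset)$ with $\prec,\sqsubset\subseteq X\times X$ such that for all $\alpha,\beta,\gamma\in X$: (S1) $\neg(\alpha\sqsubset\alpha)$; (S2) $\alpha\prec\beta\Rightarrow\alpha\sqsubset\beta$; (S3) $\alpha\sqsubset\beta\sqsubset\gamma\wedge\alpha\neq\gamma\Rightarrow\alpha\sqsubset\gamma$; (S4) $(\alpha\sqsubset\beta\wedge\beta\prec\gamma)\vee(\alpha\prec\beta\wedge\beta\sqsubset\gamma)\Rightarrow\alpha\prec\gamma$. For a relation $\lhd$ on $X$: $\alpha\frown_\lhd\beta$ iff $\alpha\neq\beta$, $\neg(\alpha\lhd\beta)$ and $\neg(\beta\lhd\alpha)$; $\lhd^\frown:=\lhd\cup\frown_\lhd$. A partial order $\lhd$ is stratified if $\frown_\lhd\cup\mathrm{id}_X$ is an equivalence relation. A stratified extension of $S$ is a stratified order $\lhd$ on $X$ with $\prec\subseteq\lhd$ and $\sqsubset\subseteq\lhd^\frown$; $ext(S)$ is the set of all stratified extensions of $S$. *)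

theory Defs
  imports Main
begin

definition so_structure :: "'a set \<Rightarrow> ('a \<times> 'a) set \<Rightarrow> ('a \<times> 'a) set \<Rightarrow> bool" where
  "so_structure X prec sqsub \<longleftrightarrow>
     prec \<subseteq> X \<times> X \<and> sqsub \<subseteq> X \<times> X \<and>
     (\<forall>a\<in>X. (a, a) \<notin> sqsub) \<and>
     (\<forall>a\<in>X. \<forall>b\<in>X. (a, b) \<in> prec \<longrightarrow> (a, b) \<in> sqsub) \<and>
     (\<forall>a\<in>X. \<forall>b\<in>X. \<forall>c\<in>X. (a, b) \<in> sqsub \<and> (b, c) \<in> sqsub \<and> a \<noteq> c \<longrightarrow> (a, c) \<in> sqsub) \<and>
     (\<forall>a\<in>X. \<forall>b\<in>X. \<forall>c\<in>X.
        ((a, b) \<in> sqsub \<and> (b, c) \<in> prec) \<or> ((a, b) \<in> prec \<and> (b, c) \<in> sqsub) \<longrightarrow> (a, c) \<in> prec)"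

definition incomp :: "'a set \<Rightarrow> ('a \<times> 'a) set \<Rightarrow> ('a \<times> 'a) set" where
  "incomp X R = {(a, b). a \<in> X \<and> b \<in> X \<and> a \<noteq> b \<and> (a, b) \<notin> R \<and> (b, a) \<notin> R}"

definition frown_closure :: "'a set \<Rightarrow> ('a \<times> 'a) set \<Rightarrow> ('a \<times> 'a) set" where
  "frown_closure X R = R \<union> incomp X R"

definition partial_order_on_X :: "'a set \<Rightarrow> ('a \<times> 'a) set \<Rightarrow> bool" where
  "partial_order_on_X X R \<longleftrightarrow> R \<subseteq> X \<times> X \<and> irrefl R \<and> trans R"

definition stratified_order :: "'a set \<Rightarrow> ('a \<times> 'a) set \<Rightarrow> bool" where
  "stratified_order X R \<longleftrightarrow> partial_order_on_X X R \<and> equiv X (incomp X R \<union> Id_on X)"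

definition ext :: "'a set \<Rightarrow> ('a \<times> 'a) set \<Rightarrow> ('a \<times> 'a) set \<Rightarrow> ('a \<times> 'a) set set" where
  "ext X prec sqsub = {R. stratified_order X R \<and> prec \<subseteq> R \<and> sqsub \<subseteq> frown_closure X R}"

end

theory Submission
  imports Defs
begin

(*
  If alpha and beta are related by \<prec>, every extension orders them,
  since \<prec> is contained in each extension.  Conversely, suppose alpha and beta are
  \<prec>-incomparable; we build an extension in which they are incomparable.

  Let S = \<sqsubset> \<union> id, a preorder on X by (S1)-(S3), and collapse alpha and beta into
  one class: x T0 z iff x S z, or x S u and v S z for some u, v in {alpha, beta}.
  T0 is again a preorder, and by (S4) no pair of \<prec> is reversed in T0.  A Zorn
  argument (a Szpilrajn-type theorem for preorders) enlarges T0 to a total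
  preorder M still reversing no pair of \<prec>.
  The strict part of a total preorder is a stratified order whose indifference
  classes are the M-equivalence classes; it contains \<prec>, its frown closure
  contains \<sqsubset> \<subseteq> M, and alpha, beta are indifferent in it.
*)

definition strict_part :: "'a set \<Rightarrow> ('a \<times> 'a) set \<Rightarrow> ('a \<times> 'a) set" where
  "strict_part X M = {(x, y). x \<in> X \<and> y \<in> X \<and> (y, x) \<notin> M}"

lemma incomp_strict_part:
  assumes "refl_on X M" and "total_on X M"
  shows "incomp X (strict_part X M) \<union> Id_on X
           = {(x, y). x \<in> X \<and> y \<in> X \<and> (x, y) \<in> M \<and> (y, x) \<in> M}"
  using assms unfolding incomp_def strict_part_def refl_on_def total_on_def by auto

lemma stratified_strict_part:
  assumes refl: "refl_on X M" and tr: "trans M" and tot: "total_on X M"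
  shows "stratified_order X (strict_part X M)"
  unfolding stratified_order_def partial_order_on_X_def
proof (intro conjI)
  show "strict_part X M \<subseteq> X \<times> X" "irrefl (strict_part X M)"
    using refl unfolding strict_part_def irrefl_def refl_on_def by auto
  show "trans (strict_part X M)"
  proof (rule transI)
    fix x y z assume "(x, y) \<in> strict_part X M" "(y, z) \<in> strict_part X M"
    then have xyz: "x \<in> X" "y \<in> X" "z \<in> X" "(y, x) \<notin> M" "(z, y) \<notin> M"
      unfolding strict_part_def by auto
    then have "(x, y) \<in> M" using tot refl unfolding total_on_def refl_on_def by metis
    then have "(z, x) \<notin> M" using xyz tr by (meson transD)
    then show "(x, z) \<in> strict_part X M" unfolding strict_part_def using xyz by simp
  qed
  show "equiv X (incomp X (strict_part X M) \<union> Id_on X)"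
    unfolding incomp_strict_part[OF refl tot]
    using refl tr unfolding equiv_def refl_on_def sym_def trans_def by blast
qed

section \<open>Extending a preorder to a total preorder\<close>

lemma trans_Union_chain:
  assumes "C \<in> chains A" and "\<And>T. T \<in> C \<Longrightarrow> trans T"
  shows "trans (\<Union>C)"
proof (rule transI)
  fix x y z assume "(x, y) \<in> \<Union>C" "(y, z) \<in> \<Union>C"
  then obtain T1 T2 where T: "T1 \<in> C" "T2 \<in> C" "(x, y) \<in> T1" "(y, z) \<in> T2" by blast
  then have "T1 \<subseteq> T2 \<or> T2 \<subseteq> T1" using chainsD[OF assms(1)] by blast
  with T assms(2) show "(x, z) \<in> \<Union>C" by (meson UnionI subsetD transD)
qed

text \<open>Forcing x below y in a transitive M where x, y are incomparable: everything
  below x becomes below everything above y.  The result is transitive and does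
  not reverse any strict pair of M.\<close>
definition add_pair :: "('a \<times> 'a) set \<Rightarrow> 'a \<Rightarrow> 'a \<Rightarrow> ('a \<times> 'a) set" where
  "add_pair M x y = M \<union> {(u, v). (u, x) \<in> M \<and> (y, v) \<in> M}"

lemma trans_add_pair:
  assumes tr: "trans M" and yx: "(y, x) \<notin> M"
  shows "trans (add_pair M x y)"
proof (rule transI)
  fix u v w assume uv: "(u, v) \<in> add_pair M x y" and vw: "(v, w) \<in> add_pair M x y"
  have "(u, w) \<in> M" if "(u, v) \<in> M" "(v, w) \<in> M" using that tr by (meson transD)
  moreover have "(u, x) \<in> M" if "(u, v) \<in> M" "(v, x) \<in> M" using that tr by (meson transD)
  moreover have "(y, w) \<in> M" if "(y, v) \<in> M" "(v, w) \<in> M" using that tr by (meson transD)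
  moreover have False if "(y, v) \<in> M" "(v, x) \<in> M" using that tr yx by (meson transD)
  ultimately show "(u, w) \<in> add_pair M x y" using uv vw unfolding add_pair_def by blast
qed

lemma add_pair_keeps_strict:
  assumes "trans M" and "(y, x) \<notin> M" and "(p, q) \<in> M" and "(q, p) \<notin> M"
  shows "(q, p) \<notin> add_pair M x y"
  using assms unfolding add_pair_def trans_def by blast

theorem total_preorder_extension:
  assumes refl: "refl_on X T0" and "trans T0" and "T0 \<subseteq> X \<times> X"
    and P: "P \<subseteq> T0" and "\<forall>(p, q)\<in>P. (q, p) \<notin> T0"
  obtains M where "T0 \<subseteq> M" "M \<subseteq> X \<times> X" "trans M" "total_on X M"
    "\<forall>(p, q)\<in>P. (q, p) \<notin> M"
proof -
  define A where
    "A = {T. T0 \<subseteq> T \<and> T \<subseteq> X \<times> X \<and> trans T \<and> (\<forall>(p, q)\<in>P. (q, p) \<notin> T)}"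
  have "\<forall>C\<in>chains A. \<exists>U\<in>A. \<forall>T\<in>C. T \<subseteq> U"
  proof
    fix C assume C: "C \<in> chains A"
    show "\<exists>U\<in>A. \<forall>T\<in>C. T \<subseteq> U"
    proof (cases "C = {}")
      case True
      have "T0 \<in> A" using assms unfolding A_def by blast
      then show ?thesis using True by blast
    next
      case False
      have CA: "C \<subseteq> A" using C chainsD2 by blast
      have "trans (\<Union>C)"
        by (rule trans_Union_chain[OF C]) (use CA in \<open>auto simp: A_def\<close>)
      moreover have "T0 \<subseteq> \<Union>C" "\<Union>C \<subseteq> X \<times> X" "\<forall>(p, q)\<in>P. (q, p) \<notin> \<Union>C"
        using False CA unfolding A_def by blast+
      ultimately have "\<Union>C \<in> A" unfolding A_def by blast
      then show ?thesis by blast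
    qed
  qed
  then obtain M where M: "M \<in> A" and maximal: "\<forall>T\<in>A. M \<subseteq> T \<longrightarrow> T = M"
    by (auto dest: Zorn_Lemma2)
  have MA: "T0 \<subseteq> M" "M \<subseteq> X \<times> X" "trans M" "\<forall>(p, q)\<in>P. (q, p) \<notin> M"
    using M unfolding A_def by auto
  have "total_on X M"
  proof (rule total_onI, rule ccontr)
    fix x y assume xy: "x \<in> X" "y \<in> X" and incomparable: "\<not> ((x, y) \<in> M \<or> (y, x) \<in> M)"
    have "add_pair M x y \<in> A"
      unfolding A_def
    proof (intro CollectI conjI)
      show "T0 \<subseteq> add_pair M x y" using MA(1) unfolding add_pair_def by blast
      show "add_pair M x y \<subseteq> X \<times> X" using MA(2) unfolding add_pair_def by blast
      show "trans (add_pair M x y)"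
        by (rule trans_add_pair[OF MA(3)]) (use incomparable in blast)
      show "\<forall>(p, q)\<in>P. (q, p) \<notin> add_pair M x y"
      proof clarify
        fix p q assume "(p, q) \<in> P" "(q, p) \<in> add_pair M x y"
        moreover from \<open>(p, q) \<in> P\<close> have "(p, q) \<in> M" "(q, p) \<notin> M" using P MA(1,4) by auto
        ultimately show False
          using add_pair_keeps_strict[OF MA(3), of y x p q] incomparable by blast
      qed
    qed
    moreover have "M \<subseteq> add_pair M x y" unfolding add_pair_def by blast
    ultimately have "add_pair M x y = M" using maximal by blast
    moreover have "(x, y) \<in> add_pair M x y"
      using xy refl MA(1) unfolding add_pair_def refl_on_def by blast
    ultimately show False using incomparable by blast
  qed
  then show thesis using that MA by blast
qed

definition collapse :: "('a \<times> 'a) set \<Rightarrow> 'a set \<Rightarrow> ('a \<times> 'a) set" where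
  "collapse S A = S \<union> {(x, z). (\<exists>u\<in>A. (x, u) \<in> S) \<and> (\<exists>v\<in>A. (v, z) \<in> S)}"

lemma collapse_preorder:
  assumes refl: "refl_on X S" and tr: "trans S" and sub: "S \<subseteq> X \<times> X"
  shows "refl_on X (collapse S A)" "trans (collapse S A)" "collapse S A \<subseteq> X \<times> X"
proof -
  show "refl_on X (collapse S A)" using refl unfolding collapse_def refl_on_def by blast
  show "collapse S A \<subseteq> X \<times> X" using sub unfolding collapse_def by blast
  show "trans (collapse S A)"
  proof (rule transI)
    fix x y z assume xy: "(x, y) \<in> collapse S A" and yz: "(y, z) \<in> collapse S A"
    have S_S: "(p, r) \<in> S" if "(p, q) \<in> S" "(q, r) \<in> S" for p q r
      using that tr by (meson transD)
    have below: "\<exists>u\<in>A. (x, u) \<in> S"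
      if "\<not> (x, z) \<in> S" using xy yz that S_S unfolding collapse_def by blast
    have above: "\<exists>v\<in>A. (v, z) \<in> S"
      if "\<not> (x, z) \<in> S" using xy yz that S_S unfolding collapse_def by blast
    show "(x, z) \<in> collapse S A" using below above unfolding collapse_def by blast
  qed
qed

text \<open>The axioms (S1)-(S4) as rules; membership in X is implied by the relations.\<close>
lemma so_structureD:
  assumes "so_structure X prec sqsub"
  shows so_carrier: "prec \<subseteq> X \<times> X" "sqsub \<subseteq> X \<times> X"
    and so_irrefl: "(x, x) \<notin> sqsub"
    and so_prec_sqsub: "(x, y) \<in> prec \<Longrightarrow> (x, y) \<in> sqsub"
    and so_trans: "(x, y) \<in> sqsub \<Longrightarrow> (y, z) \<in> sqsub \<Longrightarrow> x \<noteq> z \<Longrightarrow> (x, z) \<in> sqsub"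
    and so_sqsub_prec: "(x, y) \<in> sqsub \<Longrightarrow> (y, z) \<in> prec \<Longrightarrow> (x, z) \<in> prec"
    and so_prec_sqsub_prec: "(x, y) \<in> prec \<Longrightarrow> (y, z) \<in> sqsub \<Longrightarrow> (x, z) \<in> prec"
proof -
  obtain carrier: "prec \<subseteq> X \<times> X" "sqsub \<subseteq> X \<times> X"
    and S1: "\<forall>a\<in>X. (a, a) \<notin> sqsub"
    and S2: "\<forall>a\<in>X. \<forall>b\<in>X. (a, b) \<in> prec \<longrightarrow> (a, b) \<in> sqsub"
    and S3: "\<forall>a\<in>X. \<forall>b\<in>X. \<forall>c\<in>X.
               (a, b) \<in> sqsub \<and> (b, c) \<in> sqsub \<and> a \<noteq> c \<longrightarrow> (a, c) \<in> sqsub"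
    and S4: "\<forall>a\<in>X. \<forall>b\<in>X. \<forall>c\<in>X. ((a, b) \<in> sqsub \<and> (b, c) \<in> prec) \<or>
               ((a, b) \<in> prec \<and> (b, c) \<in> sqsub) \<longrightarrow> (a, c) \<in> prec"
    using assms unfolding so_structure_def by blast
  show "prec \<subseteq> X \<times> X" "sqsub \<subseteq> X \<times> X" by (fact carrier)+
  show "(x, x) \<notin> sqsub" using S1 carrier(2) by blast
  show "(x, y) \<in> sqsub" if "(x, y) \<in> prec"
    using that S2 carrier(1) by blast
  show "(x, z) \<in> sqsub" if "(x, y) \<in> sqsub" "(y, z) \<in> sqsub" "x \<noteq> z"
  proof -
    have "x \<in> X" "y \<in> X" "z \<in> X" using that carrier(2) by auto
    then show ?thesis using that S3 by blast
  qed
  show "(x, z) \<in> prec" if "(x, y) \<in> sqsub" "(y, z) \<in> prec"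
  proof -
    have "x \<in> X" "y \<in> X" "z \<in> X" using that carrier by auto
    then show ?thesis using that S4 by blast
  qed
  show "(x, z) \<in> prec" if "(x, y) \<in> prec" "(y, z) \<in> sqsub"
  proof -
    have "x \<in> X" "y \<in> X" "z \<in> X" using that carrier by auto
    then show ?thesis using that S4 by blast
  qed
qed

lemma so_structure_preorder:
  assumes so: "so_structure X prec sqsub"
  defines "S \<equiv> sqsub \<union> Id_on X"
  shows "refl_on X S" "trans S" "S \<subseteq> X \<times> X" "prec \<subseteq> S"
    and "\<And>x y z. (x, y) \<in> S \<Longrightarrow> (y, z) \<in> prec \<Longrightarrow> (x, z) \<in> prec"
    and "\<And>x y z. (x, y) \<in> prec \<Longrightarrow> (y, z) \<in> S \<Longrightarrow> (x, z) \<in> prec"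
proof -
  note carrier = so_carrier[OF so]
  show "refl_on X S" unfolding S_def refl_on_def by blast
  show "S \<subseteq> X \<times> X" using carrier(2) unfolding S_def by blast
  show "prec \<subseteq> S" using so_prec_sqsub[OF so] unfolding S_def by auto
  show "trans S"
  proof (rule transI)
    fix x y z assume xy: "(x, y) \<in> S" and yz: "(y, z) \<in> S"
    show "(x, z) \<in> S"
    proof (cases "x = z")
      case True
      then show ?thesis using xy carrier(2) unfolding S_def by blast
    next
      case False
      then show ?thesis using xy yz so_trans[OF so, of x y z] unfolding S_def by blast
    qed
  qed
  show "(x, z) \<in> prec" if "(x, y) \<in> S" "(y, z) \<in> prec" for x y z
    using that so_sqsub_prec[OF so, of x y z] unfolding S_def by blast
  show "(x, z) \<in> prec" if "(x, y) \<in> prec" "(y, z) \<in> S" for x y z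
    using that so_prec_sqsub_prec[OF so, of x y z] unfolding S_def by blast
qed

text \<open>Collapsing two \<prec>-incomparable elements reverses no pair of \<prec>: by (S4)
  a reversed pair would put the collapsed elements into \<prec>.\<close>
lemma collapse_keeps_prec:
  assumes so: "so_structure X prec sqsub"
    and noprec: "(a, b) \<notin> prec" "(b, a) \<notin> prec" and pq: "(p, q) \<in> prec"
  shows "(q, p) \<notin> collapse (sqsub \<union> Id_on X) {a, b}"
proof
  note S = so_structure_preorder[OF so]
  assume "(q, p) \<in> collapse (sqsub \<union> Id_on X) {a, b}"
  then consider "(q, p) \<in> sqsub \<union> Id_on X"
    | u v where "u \<in> {a, b}" "v \<in> {a, b}" "(q, u) \<in> sqsub \<union> Id_on X" "(v, p) \<in> sqsub \<union> Id_on X"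
    unfolding collapse_def by blast
  then show False
  proof cases
    case 1
    then show False using S(6)[OF pq] so_irrefl[OF so] so_prec_sqsub[OF so] by blast
  next
    case (2 u v)
    then have "(v, u) \<in> prec" using S(5,6) pq by blast
    then show False using 2(1,2) noprec so_irrefl[OF so] so_prec_sqsub[OF so] by auto
  qed
qed

lemma strict_part_in_ext:
  assumes so: "so_structure X prec sqsub"
    and refl: "refl_on X M" and tr: "trans M" and tot: "total_on X M"
    and sqsub_M: "sqsub \<subseteq> M" and strict: "\<forall>(p, q)\<in>prec. (q, p) \<notin> M"
  shows "strict_part X M \<in> ext X prec sqsub"
  unfolding ext_def
proof (intro CollectI conjI stratified_strict_part[OF refl tr tot])
  note carrier = so_carrier[OF so]
  show "prec \<subseteq> strict_part X M" using carrier(1) strict unfolding strict_part_def by auto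
  show "sqsub \<subseteq> frown_closure X (strict_part X M)"
  proof (rule subrelI)
    fix x y assume "(x, y) \<in> sqsub"
    then have "x \<in> X" "y \<in> X" "x \<noteq> y" "(x, y) \<in> M"
      using carrier(2) so_irrefl[OF so] sqsub_M by auto
    then have "(x, y) \<in> strict_part X M \<or> (x, y) \<in> incomp X (strict_part X M)"
      unfolding incomp_def strict_part_def by auto
    then show "(x, y) \<in> frown_closure X (strict_part X M)"
      unfolding frown_closure_def by blast
  qed
qed

theorem mainTheorem3:
  assumes "so_structure X prec sqsub"
    and "a \<in> X" and "b \<in> X"
  shows "(\<forall>R\<in>ext X prec sqsub. (a, b) \<in> R \<or> (b, a) \<in> R)
         \<longleftrightarrow> ((a, b) \<in> prec \<or> (b, a) \<in> prec)"
proof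
  assume all_ordered: "\<forall>R\<in>ext X prec sqsub. (a, b) \<in> R \<or> (b, a) \<in> R"
  show "(a, b) \<in> prec \<or> (b, a) \<in> prec"
  proof (rule ccontr)
    assume "\<not> ((a, b) \<in> prec \<or> (b, a) \<in> prec)"
    then have noprec: "(a, b) \<notin> prec" "(b, a) \<notin> prec" by auto
    define T0 where "T0 = collapse (sqsub \<union> Id_on X) {a, b}"
    note S = so_structure_preorder[OF assms(1)]
    note T0 = collapse_preorder[OF S(1-3), of "{a, b}", folded T0_def]
    have S_T0: "sqsub \<union> Id_on X \<subseteq> T0" unfolding T0_def collapse_def by blast
    have "prec \<subseteq> T0" using S(4) S_T0 by blast
    moreover have "\<forall>(p, q)\<in>prec. (q, p) \<notin> T0"
      using collapse_keeps_prec[OF assms(1) noprec] unfolding T0_def by blast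
    ultimately obtain M where M: "T0 \<subseteq> M" "trans M" "total_on X M" "\<forall>(p, q)\<in>prec. (q, p) \<notin> M"
      by (rule total_preorder_extension[OF T0])
    have "(a, a) \<in> sqsub \<union> Id_on X" "(b, b) \<in> sqsub \<union> Id_on X"
      using assms(2,3) by auto
    then have "(a, b) \<in> T0" "(b, a) \<in> T0" unfolding T0_def collapse_def by blast+
    then have ab: "(a, b) \<in> M" "(b, a) \<in> M" using M(1) by blast+
    have "refl_on X M" using T0(1) M(1) unfolding refl_on_def by blast
    moreover have "sqsub \<subseteq> M" using S_T0 M(1) by blast
    ultimately have "strict_part X M \<in> ext X prec sqsub"
      using strict_part_in_ext[OF assms(1) _ M(2,3) _ M(4)] by blast
    then have "(a, b) \<in> strict_part X M \<or> (b, a) \<in> strict_part X M"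
      using all_ordered by blast
    then show False using ab unfolding strict_part_def by blast
  qed
qed (unfold ext_def, blast)

end
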